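(* Let $\{Y_i\}_{i\in\mathbb{N}}$ be i.i.d. symmetric $\alpha$-stable random variables with $\alpha\in(0,2]$, fix $\beta\in(0,1)$, and for $n\ge1$ let $X^{(n)}(t)=\sum_{i=1}^{\lfloor n^\beta t\rfloor} Y_i/n^{\beta/\alpha}$, $t\ge0$, defined on $(\Omega^n,\mathcal{F}^n,\mathbb{P}^n)$ with its natural filtration $\mathcal{F}^n_t$. Fix $\delta>0$ and set $X^{(n),\delta}=X^{(n)}-K_\delta(X^{(n)})$. Then $X^{(n),\delta}$ admits a decomposition $X^{(n),\delta}=M^{n,\delta}+A^{n,\delta}$ into an $\mathcal{F}^n_t$-local martingale $M^{n,\delta}$ and a process $A^{n,\delta}$ of finite variation such that for each $t$ and each $\theta>0$ there exist stopping times $\tau_n^\theta$ with $\mathbb{P}(\tau_n^\theta\le\theta)\le 1/\theta$ and $$\sup_n\mathbb{E}\Big[[M^{n,\delta},M^{n,\delta}]_{t\wedge\tau_n^\theta}+TV(A^{n,\delta},t\wedge\tau_n^\theta)\Big]<\infty.$$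
   Context: $h_\delta(r)=(1-\delta/r)^+$ for $r>0$, and for càdlàg $x$, $K_\delta(x)(t)=\sum_{0<s\le t}h_\delta(|\Delta x(s)|)\Delta x(s)$ with $\Delta x(s)=x(s)-x(s-)$; thus $X^{(n),\delta}$ has all jumps bounded by $\delta$. $[M,M]$ denotes quadratic variation and $TV(A,t)=\sup\sum_i|A(t_i)-A(t_{i-1})|$ over partitions $0\le t_0<\dots<t_m\le t$ is the total variation of $A$ on $[0,t]$. *)

theory Defs
  imports "HOL-Probability.Probability"
begin

(* h_delta(r) = (1 - delta/r)^+ for r > 0 (value at r = 0 irrelevant, set to 0) *)
definition hdelta :: "real \<Rightarrow> real \<Rightarrow> real" where
  "hdelta \<delta> r = (if 0 < r then max 0 (1 - \<delta> / r) else 0)"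

definition left_lim :: "(real \<Rightarrow> real) \<Rightarrow> real \<Rightarrow> real" where
  "left_lim x s = Lim (at_left s) x"

definition jump :: "(real \<Rightarrow> real) \<Rightarrow> real \<Rightarrow> real" where
  "jump x s = x s - left_lim x s"

definition Kdelta :: "real \<Rightarrow> (real \<Rightarrow> real) \<Rightarrow> real \<Rightarrow> real" where
  "Kdelta \<delta> x t = (\<Sum>\<^sub>\<infinity>s\<in>{0<..t}. hdelta \<delta> \<bar>jump x s\<bar> * jump x s)"

definition cadlag :: "(real \<Rightarrow> real) \<Rightarrow> bool" where
  "cadlag x \<longleftrightarrow> (\<forall>t. continuous (at_right t) x \<and> (\<exists>l. (x \<longlongrightarrow> l) (at_left t)))"

definition sym_stable :: "real \<Rightarrow> real measure \<Rightarrow> bool" where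
  "sym_stable \<alpha> \<mu> \<longleftrightarrow> (\<exists>c>0. \<forall>u. char \<mu> u = complex_of_real (exp (- c * \<bar>u\<bar> powr \<alpha>)))"

definition nat_filtration :: "'a measure \<Rightarrow> (real \<Rightarrow> 'a \<Rightarrow> real) \<Rightarrow> real \<Rightarrow> 'a measure" where
  "nat_filtration M X s =
     sigma (space M) {X r -` B \<inter> space M | r B. 0 \<le> r \<and> r \<le> s \<and> B \<in> sets borel}"

definition adapted :: "(real \<Rightarrow> 'a measure) \<Rightarrow> (real \<Rightarrow> 'a \<Rightarrow> real) \<Rightarrow> bool" where
  "adapted F X \<longleftrightarrow> (\<forall>t\<ge>0. X t \<in> borel_measurable (F t))"

definition martingale :: "'a measure \<Rightarrow> (real \<Rightarrow> 'a measure) \<Rightarrow> (real \<Rightarrow> 'a \<Rightarrow> real) \<Rightarrow> bool" where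
  "martingale M F X \<longleftrightarrow> adapted F X \<and> (\<forall>t\<ge>0. integrable M (X t)) \<and>
     (\<forall>s t. 0 \<le> s \<and> s \<le> t \<longrightarrow> (AE \<omega> in M. real_cond_exp M (F s) (X t) \<omega> = X s \<omega>))"

definition local_martingale :: "'a measure \<Rightarrow> (real \<Rightarrow> 'a measure) \<Rightarrow> (real \<Rightarrow> 'a \<Rightarrow> real) \<Rightarrow> bool" where
  "local_martingale M F X \<longleftrightarrow> adapted F X \<and> (\<forall>\<omega>\<in>space M. cadlag (\<lambda>t. X t \<omega>)) \<and>
     (\<exists>\<tau> :: nat \<Rightarrow> 'a \<Rightarrow> real.
        (\<forall>k. stopping_time F (\<tau> k) \<and> (\<forall>\<omega>\<in>space M. 0 \<le> \<tau> k \<omega>)) \<and>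
        (AE \<omega> in M. mono (\<lambda>k. \<tau> k \<omega>) \<and> filterlim (\<lambda>k. \<tau> k \<omega>) at_top sequentially) \<and>
        (\<forall>k. martingale M F (\<lambda>t \<omega>. X (min t (\<tau> k \<omega>)) \<omega>)))"

definition total_variation :: "(real \<Rightarrow> real) \<Rightarrow> real \<Rightarrow> ennreal" where
  "total_variation f t =
     (SUP p \<in> {p. sorted_wrt (<) p \<and> (\<forall>x\<in>set p. 0 \<le> x \<and> x \<le> t)}.
        \<Sum>i<length p - 1. ennreal \<bar>f (p ! Suc i) - f (p ! i)\<bar>)"

definition finite_variation_process :: "'a measure \<Rightarrow> (real \<Rightarrow> 'a measure) \<Rightarrow> (real \<Rightarrow> 'a \<Rightarrow> real) \<Rightarrow> bool" where
  "finite_variation_process M F A \<longleftrightarrow> adapted F A \<and> (\<forall>\<omega>\<in>space M. cadlag (\<lambda>t. A t \<omega>)) \<and>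
     (AE \<omega> in M. \<forall>t\<ge>0. total_variation (\<lambda>s. A s \<omega>) t < \<infinity>)"

definition is_partition :: "real \<Rightarrow> real list \<Rightarrow> bool" where
  "is_partition t p \<longleftrightarrow> p \<noteq> [] \<and> sorted_wrt (<) p \<and> hd p = 0 \<and> last p = t"

definition mesh :: "real list \<Rightarrow> real" where
  "mesh p = foldr max (map (\<lambda>i. p ! Suc i - p ! i) [0..<length p - 1]) 0"

definition qv_sum :: "(real \<Rightarrow> real) \<Rightarrow> real list \<Rightarrow> real" where
  "qv_sum x p = (\<Sum>i<length p - 1. (x (p ! Suc i) - x (p ! i))\<^sup>2)"

definition quadratic_variation :: "'a measure \<Rightarrow> (real \<Rightarrow> 'a \<Rightarrow> real) \<Rightarrow> (real \<Rightarrow> 'a \<Rightarrow> real) \<Rightarrow> bool" where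
  "quadratic_variation M X Q \<longleftrightarrow>
     (\<forall>\<omega>\<in>space M. \<forall>t. continuous (at_right t) (\<lambda>s. Q s \<omega>)) \<and>
     (\<forall>t\<ge>0. Q t \<in> borel_measurable M) \<and>
     (\<forall>t\<ge>0. \<forall>P :: nat \<Rightarrow> real list.
        (\<forall>k. is_partition t (P k)) \<and> (\<lambda>k. mesh (P k)) \<longlonglongrightarrow> 0 \<longrightarrow>
        (\<forall>\<epsilon>>0. (\<lambda>k. measure M {\<omega> \<in> space M. \<epsilon> < \<bar>qv_sum (\<lambda>s. X s \<omega>) (P k) - Q t \<omega>\<bar>})
                   \<longlonglongrightarrow> 0))"

definition Xn :: "real \<Rightarrow> real \<Rightarrow> (nat \<Rightarrow> 'a \<Rightarrow> real) \<Rightarrow> nat \<Rightarrow> real \<Rightarrow> 'a \<Rightarrow> real" where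
  "Xn \<alpha> \<beta> Y n t \<omega> =
     (\<Sum>i\<in>{1..nat \<lfloor>real n powr \<beta> * t\<rfloor>}. Y i \<omega>) / real n powr (\<beta> / \<alpha>)"

definition Xn_delta :: "real \<Rightarrow> real \<Rightarrow> real \<Rightarrow> (nat \<Rightarrow> 'a \<Rightarrow> real) \<Rightarrow> nat \<Rightarrow> real \<Rightarrow> 'a \<Rightarrow> real" where
  "Xn_delta \<alpha> \<beta> \<delta> Y n t \<omega> =
     Xn \<alpha> \<beta> Y n t \<omega> - Kdelta \<delta> (\<lambda>s. Xn \<alpha> \<beta> Y n s \<omega>) t"

end

theory Submission
  imports Defs
begin

(*
  Deleting the jumps larger than \<delta> from the step process X^(n) replaces each increment
  Y_i / n^(\<beta>/\<alpha>) by its clamp to [-\<delta>, \<delta>]. The law of Y_i is symmetric, so the clamped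
  increments are independent, bounded and centred: X^(n),\<delta> is itself a martingale for the natural
  filtration of X^(n) (localised by the deterministic times k), with no finite-variation part, and
  its quadratic variation is the sum of the squared clamped increments.
  The truncation inequality E min(Z^2, b^2) \<le> 10 b^2 \<integral>_0^1 (1 - Re \<phi>_Z(u/b)) du together with
  \<phi>(u) = exp(-C |u|^\<alpha>) bounds the mean of each square by 10 C \<delta>^(2-\<alpha>) n^(-\<beta>). There are
  n^\<beta> t of them up to time t, so E [M,M]_t \<le> 10 C \<delta>^(2-\<alpha>) t uniformly in n and for every
  stopping time.
*)

section \<open>Step processes, their jumps, and truncation\<close>

definition partial_sum_process :: "real \<Rightarrow> (nat \<Rightarrow> 'a \<Rightarrow> real) \<Rightarrow> real \<Rightarrow> 'a \<Rightarrow> real" where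
  "partial_sum_process a Z t \<omega> = (\<Sum>i\<in>{1..nat \<lfloor>a * t\<rfloor>}. Z i \<omega>)"

definition clamp :: "real \<Rightarrow> real \<Rightarrow> real" where
  "clamp \<delta> x = max (- \<delta>) (min \<delta> x)"

lemma eventually_floor_eq_at_right:
  fixes a z :: real
  assumes "0 < a"
  shows "\<forall>\<^sub>F x in at_right z. \<lfloor>a * x\<rfloor> = \<lfloor>a * z\<rfloor>"
  unfolding eventually_at_right_field
proof (intro exI conjI allI impI)
  show "z < (\<lfloor>a * z\<rfloor> + 1) / a"
    using assms by (simp add: pos_less_divide_eq mult.commute)
  fix y assume "z < y" "y < (\<lfloor>a * z\<rfloor> + 1) / a"
  then have "a * z < a * y" "a * y < \<lfloor>a * z\<rfloor> + 1"
    using assms by (simp_all add: pos_less_divide_eq mult.commute)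
  then show "\<lfloor>a * y\<rfloor> = \<lfloor>a * z\<rfloor>"
    by (simp add: floor_eq_iff) linarith
qed

lemma eventually_floor_eq_at_left:
  fixes a z :: real
  assumes "0 < a"
  shows "\<forall>\<^sub>F x in at_left z. \<lfloor>a * x\<rfloor> = \<lceil>a * z\<rceil> - 1"
  unfolding eventually_at_left_field
proof (intro exI conjI allI impI)
  show "(\<lceil>a * z\<rceil> - 1) / a < z"
    using assms by (simp add: pos_divide_less_eq mult.commute) linarith
  fix y assume "(\<lceil>a * z\<rceil> - 1) / a < y" "y < z"
  then have "\<lceil>a * z\<rceil> - 1 < a * y" "a * y < a * z"
    using assms by (simp_all add: pos_divide_less_eq mult.commute)
  then show "\<lfloor>a * y\<rfloor> = \<lceil>a * z\<rceil> - 1"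
    by (simp add: floor_eq_iff) linarith
qed

lemma continuous_at_right_floor_step:
  fixes a t :: real
  assumes "0 < a"
  shows "continuous (at_right t) (\<lambda>z. G (nat \<lfloor>a * z\<rfloor>))"
  unfolding continuous_within
  by (intro tendsto_eventually eventually_mono[OF eventually_floor_eq_at_right[OF assms]]) simp

lemma tendsto_at_left_floor_step:
  fixes a t :: real
  assumes "0 < a"
  shows "((\<lambda>z. G (nat \<lfloor>a * z\<rfloor>)) \<longlongrightarrow> G (nat (\<lceil>a * t\<rceil> - 1))) (at_left t)"
  by (intro tendsto_eventually eventually_mono[OF eventually_floor_eq_at_left[OF assms]]) simp

lemma cadlag_floor_step: "0 < (a::real) \<Longrightarrow> cadlag (\<lambda>z. G (nat \<lfloor>a * z\<rfloor>))"
  unfolding cadlag_def using continuous_at_right_floor_step tendsto_at_left_floor_step by blast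

lemma jump_floor_step:
  fixes a s :: real
  assumes "0 < a"
  shows "jump (\<lambda>z. G (nat \<lfloor>a * z\<rfloor>)) s =
    (if a * s = \<lfloor>a * s\<rfloor> then G (nat \<lfloor>a * s\<rfloor>) - G (nat (\<lfloor>a * s\<rfloor> - 1)) else 0)"
proof -
  have "left_lim (\<lambda>z. G (nat \<lfloor>a * z\<rfloor>)) s = G (nat (\<lceil>a * s\<rceil> - 1))"
    unfolding left_lim_def
    by (rule tendsto_Lim[OF trivial_limit_at_left_real tendsto_at_left_floor_step[OF assms]])
  then show ?thesis
    unfolding jump_def by (auto simp: ceiling_altdef)
qed

lemma Kdelta_floor_step:
  fixes a t :: real
  assumes a: "0 < a"
  shows "Kdelta \<delta> (\<lambda>z. G (nat \<lfloor>a * z\<rfloor>)) t =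
    (\<Sum>k\<in>{1..nat \<lfloor>a * t\<rfloor>}. hdelta \<delta> \<bar>G k - G (k - 1)\<bar> * (G k - G (k - 1)))"
proof -
  let ?x = "\<lambda>z. G (nat \<lfloor>a * z\<rfloor>)"
  let ?f = "\<lambda>s. hdelta \<delta> \<bar>jump ?x s\<bar> * jump ?x s"
  let ?T = "(\<lambda>k. real k / a) ` {1..nat \<lfloor>a * t\<rfloor>}"
  have jump_at_grid: "jump ?x (real k / a) = G k - G (k - 1)" if "1 \<le> k" for k
    using jump_floor_step[OF a, of G "real k / a"] a that by (simp add: nat_diff_distrib)
  \<comment> \<open>the jumps occur only on the grid \<open>\<nat>/a\<close>\<close>
  have "Kdelta \<delta> ?x t = infsum ?f ?T"
    unfolding Kdelta_def
  proof (rule infsum_cong_neutral)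
    fix s assume "s \<in> ?T - {0<..t}"
    then obtain k where "1 \<le> k" "k \<le> nat \<lfloor>a * t\<rfloor>" "s = real k / a" "s \<notin> {0<..t}"
      by auto
    moreover from this have "real k \<le> a * t"
      by (simp add: le_nat_floor) linarith
    ultimately show "?f s = 0"
      using a by (auto simp: divide_le_eq mult.commute)
  next
    fix s assume s: "s \<in> {0<..t} - ?T"
    have "a * s \<noteq> \<lfloor>a * s\<rfloor>"
    proof
      assume grid: "a * s = \<lfloor>a * s\<rfloor>"
      have "0 < a * s" "a * s \<le> a * t" using s a by auto
      then have "nat \<lfloor>a * s\<rfloor> \<in> {1..nat \<lfloor>a * t\<rfloor>}"
        using grid by (auto intro: nat_mono floor_mono)
      moreover have "s = real (nat \<lfloor>a * s\<rfloor>) / a"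
        using grid \<open>0 < a * s\<close> a by (simp add: field_simps)
      ultimately show False using s by blast
    qed
    then show "?f s = 0" using jump_floor_step[OF a] by simp
  qed simp
  also have "\<dots> = (\<Sum>k\<in>{1..nat \<lfloor>a * t\<rfloor>}. ?f (real k / a))"
    using a by (simp add: sum.reindex inj_on_def)
  also have "\<dots> = (\<Sum>k\<in>{1..nat \<lfloor>a * t\<rfloor>}. hdelta \<delta> \<bar>G k - G (k - 1)\<bar> * (G k - G (k - 1)))"
    by (intro sum.cong) (auto simp: jump_at_grid)
  finally show ?thesis .
qed

lemma partial_sum_process_path:
  "(\<lambda>t. partial_sum_process a Z t \<omega>) = (\<lambda>t. (\<lambda>k. \<Sum>i\<in>{1..k}. Z i \<omega>) (nat \<lfloor>a * t\<rfloor>))"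
  by (simp add: partial_sum_process_def)

lemma sum_atLeastAtMost_diff_pred:
  fixes w :: "nat \<Rightarrow> 'b::ab_group_add"
  assumes "1 \<le> k"
  shows "(\<Sum>i\<in>{1..k}. w i) - (\<Sum>i\<in>{1..k - 1}. w i) = w k"
proof -
  have "{1..k} = insert k {1..k - 1}" using assms by auto
  then show ?thesis using assms by simp
qed

lemma Kdelta_partial_sum_process:
  assumes "0 < a"
  shows "Kdelta \<delta> (\<lambda>s. partial_sum_process a Z s \<omega>) t =
    partial_sum_process a (\<lambda>i \<omega>. hdelta \<delta> \<bar>Z i \<omega>\<bar> * Z i \<omega>) t \<omega>"
proof -
  let ?G = "\<lambda>k. \<Sum>i\<in>{1..k}. Z i \<omega>"
  have "Kdelta \<delta> (\<lambda>s. partial_sum_process a Z s \<omega>) t =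
      (\<Sum>k\<in>{1..nat \<lfloor>a * t\<rfloor>}. hdelta \<delta> \<bar>?G k - ?G (k - 1)\<bar> * (?G k - ?G (k - 1)))"
    unfolding partial_sum_process_def by (rule Kdelta_floor_step[OF assms])
  also have "\<dots> = partial_sum_process a (\<lambda>i \<omega>. hdelta \<delta> \<bar>Z i \<omega>\<bar> * Z i \<omega>) t \<omega>"
    unfolding partial_sum_process_def
  proof (rule sum.cong)
    fix k assume "k \<in> {1..nat \<lfloor>a * t\<rfloor>}"
    then show "hdelta \<delta> \<bar>?G k - ?G (k - 1)\<bar> * (?G k - ?G (k - 1)) = hdelta \<delta> \<bar>Z k \<omega>\<bar> * Z k \<omega>"
      using sum_atLeastAtMost_diff_pred[of k "\<lambda>i. Z i \<omega>"] by simp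
  qed simp
  finally show ?thesis .
qed

lemma sub_hdelta_eq_clamp:
  assumes "0 < \<delta>"
  shows "x - hdelta \<delta> \<bar>x\<bar> * x = clamp \<delta> x"
proof (cases "\<bar>x\<bar> \<le> \<delta>")
  case True
  then have "hdelta \<delta> \<bar>x\<bar> = 0"
    unfolding hdelta_def using assms by (auto simp: field_simps)
  then show ?thesis using True by (auto simp: clamp_def)
next
  case False
  then have "hdelta \<delta> \<bar>x\<bar> = 1 - \<delta> / \<bar>x\<bar>"
    unfolding hdelta_def using assms by (auto simp: field_simps)
  then show ?thesis
    using False assms by (cases "0 \<le> x") (auto simp: clamp_def field_simps)
qed

lemma abs_clamp_le: "0 < \<delta> \<Longrightarrow> \<bar>clamp \<delta> x\<bar> \<le> \<delta>"
  by (simp add: clamp_def)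

lemma clamp_minus: "0 < \<delta> \<Longrightarrow> clamp \<delta> (- x) = - clamp \<delta> x"
  by (simp add: clamp_def)

lemma clamp_borel [measurable]: "clamp \<delta> \<in> borel_measurable borel"
  unfolding clamp_def by measurable

lemma power2_clamp_le:
  assumes "0 < \<delta>"
  shows "(clamp \<delta> x)\<^sup>2 \<le> \<delta>\<^sup>2 * min ((x / \<delta>)\<^sup>2) 1"
proof -
  have "\<bar>clamp \<delta> x\<bar> \<le> \<bar>x\<bar>" "\<bar>clamp \<delta> x\<bar> \<le> \<delta>"
    using assms by (auto simp: clamp_def)
  then have "(clamp \<delta> x)\<^sup>2 \<le> min (x\<^sup>2) (\<delta>\<^sup>2)"
    using assms by (simp add: abs_le_square_iff[symmetric])
  also have "min (x\<^sup>2) (\<delta>\<^sup>2) = \<delta>\<^sup>2 * min ((x / \<delta>)\<^sup>2) 1"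
    using assms by (simp add: min_mult_distrib_left power_divide)
  finally show ?thesis .
qed

lemma Xn_eq_partial_sum_process:
  "Xn \<alpha> \<beta> Y n = partial_sum_process (real n powr \<beta>) (\<lambda>i \<omega>. Y i \<omega> / real n powr (\<beta> / \<alpha>))"
  by (simp add: fun_eq_iff Xn_def partial_sum_process_def sum_divide_distrib)

lemma Xn_delta_eq_partial_sum_process:
  assumes "1 \<le> n" "0 < \<delta>"
  shows "Xn_delta \<alpha> \<beta> \<delta> Y n =
    partial_sum_process (real n powr \<beta>) (\<lambda>i \<omega>. clamp \<delta> (Y i \<omega> / real n powr (\<beta> / \<alpha>)))"
proof (intro ext)
  fix t \<omega>
  let ?Y = "\<lambda>i \<omega>. Y i \<omega> / real n powr (\<beta> / \<alpha>)"
  have a: "0 < real n powr \<beta>" using assms by simp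
  have "Xn_delta \<alpha> \<beta> \<delta> Y n t \<omega> = partial_sum_process (real n powr \<beta>) ?Y t \<omega>
      - partial_sum_process (real n powr \<beta>) (\<lambda>i \<omega>. hdelta \<delta> \<bar>?Y i \<omega>\<bar> * ?Y i \<omega>) t \<omega>"
    unfolding Xn_delta_def Xn_eq_partial_sum_process Kdelta_partial_sum_process[OF a] ..
  also have "\<dots> = partial_sum_process (real n powr \<beta>) (\<lambda>i \<omega>. clamp \<delta> (?Y i \<omega>)) t \<omega>"
    unfolding partial_sum_process_def sum_subtractf[symmetric] sub_hdelta_eq_clamp[OF assms(2)] ..
  finally show "Xn_delta \<alpha> \<beta> \<delta> Y n t \<omega> = partial_sum_process (real n powr \<beta>) (\<lambda>i \<omega>. clamp \<delta> (?Y i \<omega>)) t \<omega>" .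
qed

section \<open>Quadratic and total variation of step processes\<close>

lemma increment_le_mesh:
  assumes "i < length p - 1"
  shows "p ! Suc i - p ! i \<le> mesh p"
proof -
  have le_foldr_max: "x \<in> set xs \<Longrightarrow> x \<le> foldr max xs (z::real)" for x xs z
    by (induction xs) auto
  show ?thesis
    unfolding mesh_def by (rule le_foldr_max) (use assms in auto)
qed

lemma sum_Ioc_telescope:
  fixes N :: "nat \<Rightarrow> nat" and f :: "nat \<Rightarrow> 'b::comm_monoid_add"
  assumes "\<And>i j. i \<le> j \<Longrightarrow> j \<le> m \<Longrightarrow> N i \<le> N j"
  shows "(\<Sum>i<m. \<Sum>j\<in>{N i<..N (Suc i)}. f j) = (\<Sum>j\<in>{N 0<..N m}. f j)"
  using assms
proof (induction m)
  case (Suc m)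
  have "N 0 \<le> N m" "N m \<le> N (Suc m)" using Suc.prems by auto
  then have "{N 0<..N (Suc m)} = {N 0<..N m} \<union> {N m<..N (Suc m)}" by auto
  then show ?case
    using Suc by (simp add: sum.union_disjoint ivl_disj_int)
qed simp

lemma sum_atLeastAtMost_diff:
  fixes w :: "nat \<Rightarrow> 'b::ab_group_add"
  assumes "N \<le> N'"
  shows "(\<Sum>j\<in>{1..N'}. w j) - (\<Sum>j\<in>{1..N}. w j) = (\<Sum>j\<in>{N<..N'}. w j)"
proof -
  have "{1..N'} = {1..N} \<union> {N<..N'}" using assms by auto
  then have "(\<Sum>j\<in>{1..N'}. w j) = (\<Sum>j\<in>{1..N}. w j) + (\<Sum>j\<in>{N<..N'}. w j)"
    by (simp only:) (rule sum.union_disjoint, auto)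
  then show ?thesis by simp
qed

lemma qv_sum_partial_sum_process:
  fixes a t :: real
  assumes a: "0 < a" and p: "is_partition t p" and fine: "mesh p < 1 / a"
  shows "qv_sum (\<lambda>s. partial_sum_process a Z s \<omega>) p = partial_sum_process a (\<lambda>i \<omega>. (Z i \<omega>)\<^sup>2) t \<omega>"
proof -
  define N where "N i = nat \<lfloor>a * (p ! i)\<rfloor>" for i
  let ?m = "length p - 1"
  have ne: "p \<noteq> []" and sorted: "sorted_wrt (<) p" and "hd p = 0" "last p = t"
    using p unfolding is_partition_def by auto
  then have N_first: "N 0 = 0" and N_last: "N ?m = nat \<lfloor>a * t\<rfloor>"
    unfolding N_def by (simp_all add: hd_conv_nth last_conv_nth)
  have N_mono: "N i \<le> N j" if "i \<le> j" "j \<le> ?m" for i j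
  proof -
    have "p ! i \<le> p ! j"
      using sorted_wrt_nth_less[OF sorted, of i j] that ne
      by (cases "i = j") (auto simp: less_imp_le)
    then show ?thesis unfolding N_def using a by (intro nat_mono floor_mono) simp
  qed
  \<comment> \<open>a mesh below \<open>1/a\<close> lets at most one jump into each partition interval\<close>
  have N_step: "N (Suc i) \<le> Suc (N i)" if "i < ?m" for i
  proof -
    have "p ! Suc i - p ! i < 1 / a"
      using increment_le_mesh[OF that] fine by linarith
    then have "a * p ! Suc i < a * p ! i + 1"
      using a by (simp add: field_simps)
    then show ?thesis unfolding N_def by linarith
  qed
  have square_increment: "(\<Sum>j\<in>{N i<..N (Suc i)}. w j)\<^sup>2 = (\<Sum>j\<in>{N i<..N (Suc i)}. (w j)\<^sup>2)"
    if "i < ?m" for i and w :: "nat \<Rightarrow> real"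
  proof -
    have "{N i<..N (Suc i)} = {} \<or> {N i<..N (Suc i)} = {N (Suc i)}"
      using N_step[OF that] by (cases "N (Suc i) = Suc (N i)") auto
    then show ?thesis by auto
  qed
  have "qv_sum (\<lambda>s. partial_sum_process a Z s \<omega>) p = (\<Sum>i<?m. \<Sum>j\<in>{N i<..N (Suc i)}. (Z j \<omega>)\<^sup>2)"
    unfolding qv_sum_def partial_sum_process_def N_def[symmetric]
  proof (rule sum.cong)
    fix i assume "i \<in> {..<?m}"
    then have i: "i < ?m" by simp
    then have "(\<Sum>j\<in>{1..N (Suc i)}. Z j \<omega>) - (\<Sum>j\<in>{1..N i}. Z j \<omega>) = (\<Sum>j\<in>{N i<..N (Suc i)}. Z j \<omega>)"
      using N_mono[of i "Suc i"] by (intro sum_atLeastAtMost_diff) auto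
    then show "((\<Sum>j\<in>{1..N (Suc i)}. Z j \<omega>) - (\<Sum>j\<in>{1..N i}. Z j \<omega>))\<^sup>2 =
        (\<Sum>j\<in>{N i<..N (Suc i)}. (Z j \<omega>)\<^sup>2)"
      using square_increment[OF i] by simp
  qed simp
  also have "\<dots> = (\<Sum>j\<in>{N 0<..N ?m}. (Z j \<omega>)\<^sup>2)"
    by (rule sum_Ioc_telescope) (use N_mono in auto)
  also have "{N 0<..N ?m} = {1..nat \<lfloor>a * t\<rfloor>}"
    unfolding N_first N_last by auto
  finally show ?thesis unfolding partial_sum_process_def .
qed

lemma quadratic_variation_partial_sum_process:
  fixes a :: real
  assumes a: "0 < a" and Z: "\<And>i. Z i \<in> borel_measurable M"
  shows "quadratic_variation M (partial_sum_process a Z) (partial_sum_process a (\<lambda>i \<omega>. (Z i \<omega>)\<^sup>2))"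
  unfolding quadratic_variation_def
proof (intro conjI ballI allI impI)
  fix \<omega> t
  show "continuous (at_right t) (\<lambda>s. partial_sum_process a (\<lambda>i \<omega>. (Z i \<omega>)\<^sup>2) s \<omega>)"
    unfolding partial_sum_process_path by (rule continuous_at_right_floor_step[OF a])
next
  fix t :: real
  show "partial_sum_process a (\<lambda>i \<omega>. (Z i \<omega>)\<^sup>2) t \<in> borel_measurable M"
    unfolding partial_sum_process_def by (intro borel_measurable_sum borel_measurable_power Z)
next
  fix t :: real and P :: "nat \<Rightarrow> real list" and \<epsilon> :: real
  assume "0 \<le> t" and P: "(\<forall>k. is_partition t (P k)) \<and> (\<lambda>k. mesh (P k)) \<longlonglongrightarrow> 0" and "0 < \<epsilon>"
  have "\<forall>\<^sub>F k in sequentially. mesh (P k) < 1 / a"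
    using P a by (intro order_tendstoD(2)) auto
  then have "\<forall>\<^sub>F k in sequentially. measure M {\<omega> \<in> space M. \<epsilon> <
      \<bar>qv_sum (\<lambda>s. partial_sum_process a Z s \<omega>) (P k) - partial_sum_process a (\<lambda>i \<omega>. (Z i \<omega>)\<^sup>2) t \<omega>\<bar>} = 0"
  proof eventually_elim
    case (elim k)
    then show ?case
      using P \<open>0 < \<epsilon>\<close> qv_sum_partial_sum_process[OF a, of t "P k" Z] by simp
  qed
  then show "(\<lambda>k. measure M {\<omega> \<in> space M. \<epsilon> <
      \<bar>qv_sum (\<lambda>s. partial_sum_process a Z s \<omega>) (P k) - partial_sum_process a (\<lambda>i \<omega>. (Z i \<omega>)\<^sup>2) t \<omega>\<bar>}) \<longlonglongrightarrow> 0"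
    by (rule tendsto_eventually)
qed

lemma total_variation_const: "total_variation (\<lambda>s. c) t = 0"
  unfolding total_variation_def by (intro antisym SUP_least) auto

lemma finite_variation_process_zero: "finite_variation_process M F (\<lambda>t \<omega>. 0)"
  unfolding finite_variation_process_def adapted_def cadlag_def
  by (auto simp: total_variation_const)

lemma partial_sum_process_mono:
  assumes "0 \<le> a" "s \<le> t" "\<And>i. 0 \<le> Z i \<omega>"
  shows "partial_sum_process a Z s \<omega> \<le> partial_sum_process a Z t \<omega>"
  unfolding partial_sum_process_def
  using assms by (intro sum_mono2) (auto intro!: nat_mono floor_mono mult_left_mono)

lemma nn_integral_partial_sum_process_le:
  assumes Z: "\<And>i. Z i \<in> borel_measurable M" "\<And>i \<omega>. 0 \<le> Z i \<omega>"
    and K: "\<And>i. (\<integral>\<^sup>+\<omega>. ennreal (Z i \<omega>) \<partial>M) \<le> ennreal K"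
  shows "(\<integral>\<^sup>+\<omega>. ennreal (partial_sum_process a Z t \<omega>) \<partial>M) \<le> of_nat (nat \<lfloor>a * t\<rfloor>) * ennreal K"
proof -
  have "(\<integral>\<^sup>+\<omega>. ennreal (partial_sum_process a Z t \<omega>) \<partial>M) =
      (\<Sum>i\<in>{1..nat \<lfloor>a * t\<rfloor>}. \<integral>\<^sup>+\<omega>. ennreal (Z i \<omega>) \<partial>M)"
    unfolding partial_sum_process_def using Z
    by (simp add: sum_ennreal[symmetric] del: sum_ennreal) (rule nn_integral_sum, auto)
  also have "\<dots> \<le> of_nat (nat \<lfloor>a * t\<rfloor>) * ennreal K"
    using sum_mono[of "{1..nat \<lfloor>a * t\<rfloor>}", OF K] by simp
  finally show ?thesis .
qed

section \<open>Truncated second moments from characteristic functions\<close>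

lemma min_power2_one_le_one_minus_sin_div:
  fixes y :: real
  assumes "y \<noteq> 0"
  shows "min (y\<^sup>2) 1 \<le> 10 * (1 - sin y / y)"
proof -
  have pos: "min (y\<^sup>2) 1 \<le> 10 * (1 - sin y / y)" if y: "0 < y" for y :: real
  proof (cases "2 \<le> y")
    case True
    have "sin y / y \<le> 1 / y"
      using y by (simp add: divide_right_mono)
    also have "1 / y \<le> 1 / 2"
      using True by (simp add: field_simps)
    finally show ?thesis by simp
  next
    case False
    \<comment> \<open>fifth-order Taylor bound, and \<open>y\<^sup>5 \<le> 4 y\<^sup>3\<close> for \<open>y < 2\<close>\<close>
    have "\<bar>sin y - (\<Sum>m<5. sin_coeff m * y ^ m)\<bar> \<le> inverse (fact 5) * \<bar>y\<bar> ^ 5"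
      by (rule Maclaurin_sin_bound)
    moreover have "(\<Sum>m<5. sin_coeff m * y ^ m) = y - y^3/6"
      by (simp add: lessThan_nat_numeral sin_coeff_def fact_numeral)
    moreover have "inverse (fact 5) * \<bar>y\<bar> ^ 5 = y^5/120"
      using y by (simp add: fact_numeral field_simps)
    ultimately have "sin y \<le> y - y^3/6 + y^5/120" by linarith
    moreover have "y^2 * y^3 \<le> 4 * y^3"
      using False y power_mono[of y 2 2] by (intro mult_right_mono) auto
    then have "y^5 \<le> 4 * y^3" by (simp add: power_add[symmetric])
    ultimately have "sin y \<le> (1 - (2/15) * y\<^sup>2) * y"
      by (simp add: algebra_simps power2_eq_square power3_eq_cube)
    then have "sin y / y \<le> 1 - (2/15) * y\<^sup>2"
      using y by (simp add: divide_le_eq mult.commute)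
    moreover have "Q \<le> 10 * (1 - S)" if "S \<le> 1 - 2/15 * Q" "0 \<le> Q" for S Q :: real
      using that by (simp add: field_simps)
    ultimately have "y\<^sup>2 \<le> 10 * (1 - sin y / y)"
      using zero_le_power2[of y] by blast
    then show ?thesis by (rule min.coboundedI1)
  qed
  show ?thesis
  proof (cases "0 < y")
    case False
    with pos[of "- y"] assms show ?thesis by simp
  qed (rule pos)
qed

lemma nn_integral_one_minus_cos_unit_interval:
  fixes y :: real
  assumes "y \<noteq> 0"
  shows "(\<integral>\<^sup>+u. ennreal ((1 - cos (u * y)) * indicator {0..1} u) \<partial>lborel) = ennreal (1 - sin y / y)"
proof (rule nn_integral_has_integral_lborel)
  show "(\<lambda>u. (1 - cos (u * y)) * indicator {0..1} u) \<in> borel_measurable borel"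
    by measurable
  show "0 \<le> (1 - cos (u * y)) * indicator {0..1} u" for u :: real
    by (simp add: indicator_def)
  have "((\<lambda>u. 1 - cos (u * y)) has_integral ((1 - sin (1 * y) / y) - (0 - sin (0 * y) / y))) {0..1::real}"
  proof (rule fundamental_theorem_of_calculus)
    fix u :: real
    have "((\<lambda>u. u - sin (u * y) / y) has_real_derivative (1 - cos (u * y))) (at u within {0..1})"
      using assms by (auto intro!: derivative_eq_intros simp: field_simps)
    then show "((\<lambda>u. u - sin (u * y) / y) has_vector_derivative (1 - cos (u * y))) (at u within {0..1})"
      by (simp add: has_real_derivative_iff_has_vector_derivative)
  qed simp
  moreover have "(\<lambda>u. (1 - cos (u * y)) * indicator {0..1} u) =
      (\<lambda>u. if u \<in> {0..1} then 1 - cos (u * y) else 0)"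
    by (auto simp: indicator_def)
  ultimately show "((\<lambda>u. (1 - cos (u * y)) * indicator {0..1} u) has_integral (1 - sin y / y)) UNIV"
    by (simp only: has_integral_restrict_UNIV) simp
qed

lemma integral_cos_eq_Re_char:
  assumes "real_distribution \<mu>"
  shows "(\<integral>x. cos (v * x) \<partial>\<mu>) = Re (char \<mu> v)"
proof -
  interpret real_distribution \<mu> by fact
  have "integrable \<mu> (\<lambda>x. iexp (v * x))"
    by (rule integrable_iexp) auto
  then have "(\<integral>x. Re (iexp (v * x)) \<partial>\<mu>) = Re (char \<mu> v)"
    unfolding char_def by (rule integral_Re)
  then show ?thesis by (simp add: Re_exp)
qed

lemma nn_integral_truncated_square_le_char:
  fixes \<mu> :: "real measure"
  assumes D: "real_distribution \<mu>" and b: "0 < b"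
  shows "(\<integral>\<^sup>+x. ennreal (min ((x / b)\<^sup>2) 1) \<partial>\<mu>) \<le>
    10 * (\<integral>\<^sup>+u. ennreal ((1 - Re (char \<mu> (u / b))) * indicator {0..1} u) \<partial>lborel)"
proof -
  interpret mu: real_distribution \<mu> by fact
  interpret pair_sigma_finite \<mu> lborel
    by (intro pair_sigma_finite.intro mu.sigma_finite_measure_axioms lborel.sigma_finite_measure_axioms)
  have [measurable_cong]: "sets \<mu> = sets borel" by simp
  define f where "f x u = ennreal ((1 - cos (u * (x / b))) * indicator {0..1} u)" for x u :: real
  have [measurable]: "case_prod f \<in> borel_measurable (\<mu> \<Otimes>\<^sub>M lborel)"
    unfolding f_def by measurable
  have "(\<integral>\<^sup>+x. ennreal (min ((x / b)\<^sup>2) 1) \<partial>\<mu>) \<le> (\<integral>\<^sup>+x. 10 * (\<integral>\<^sup>+u. f x u \<partial>lborel) \<partial>\<mu>)"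
  proof (rule nn_integral_mono)
    fix x :: real
    show "ennreal (min ((x / b)\<^sup>2) 1) \<le> 10 * (\<integral>\<^sup>+u. f x u \<partial>lborel)"
    proof (cases "x = 0")
      case False
      then have y: "x / b \<noteq> 0" using b by simp
      let ?r = "1 - sin (x / b) / (x / b)"
      have le: "min ((x / b)\<^sup>2) 1 \<le> 10 * ?r"
        by (rule min_power2_one_le_one_minus_sin_div[OF y])
      have "0 \<le> min ((x / b)\<^sup>2) 1" by simp
      also note le
      finally have "0 \<le> ?r" by simp
      have "ennreal (min ((x / b)\<^sup>2) 1) \<le> ennreal (10 * ?r)"
        by (rule ennreal_leI[OF le])
      also have "\<dots> = ennreal 10 * ennreal ?r"
        using \<open>0 \<le> ?r\<close> by (intro ennreal_mult) simp_all
      also have "\<dots> = 10 * (\<integral>\<^sup>+u. f x u \<partial>lborel)"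
        unfolding f_def nn_integral_one_minus_cos_unit_interval[OF y] by simp
      finally show ?thesis .
    qed simp
  qed
  also have "\<dots> = 10 * (\<integral>\<^sup>+u. (\<integral>\<^sup>+x. f x u \<partial>\<mu>) \<partial>lborel)"
    by (subst nn_integral_cmult) (simp_all add: Fubini')
  also have "(\<integral>\<^sup>+u. (\<integral>\<^sup>+x. f x u \<partial>\<mu>) \<partial>lborel) =
      (\<integral>\<^sup>+u. ennreal ((1 - Re (char \<mu> (u / b))) * indicator {0..1} u) \<partial>lborel)"
  proof (intro nn_integral_cong)
    fix u :: real
    have bounded: "integrable \<mu> (\<lambda>x. 1 - cos (u / b * x))"
      by (intro mu.integrable_const_bound[where B=2]) auto
    have "(\<integral>\<^sup>+x. ennreal (1 - cos (u / b * x)) \<partial>\<mu>) = ennreal (\<integral>x. 1 - cos (u / b * x) \<partial>\<mu>)"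
      by (rule nn_integral_eq_integral[OF bounded]) auto
    also have "(\<integral>x. 1 - cos (u / b * x) \<partial>\<mu>) = 1 - Re (char \<mu> (u / b))"
      using integral_cos_eq_Re_char[OF D, of "u / b"] mu.prob_space
      by (simp add: Bochner_Integration.integral_diff[OF _ mu.integrable_const_bound[where B=1]])
    finally show "(\<integral>\<^sup>+x. f x u \<partial>\<mu>) = ennreal ((1 - Re (char \<mu> (u / b))) * indicator {0..1} u)"
      unfolding f_def by (cases "u \<in> {0..1}") (simp_all add: mult.commute)
  qed
  finally show ?thesis .
qed

lemma nn_integral_truncated_square_le_stable:
  fixes \<mu> :: "real measure"
  assumes D: "real_distribution \<mu>"
    and char: "\<And>u. char \<mu> u = complex_of_real (exp (- C * \<bar>u\<bar> powr \<alpha>))"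
    and "0 < C" "0 < \<alpha>" "0 < b"
  shows "(\<integral>\<^sup>+x. ennreal (min ((x / b)\<^sup>2) 1) \<partial>\<mu>) \<le> ennreal (10 * C * b powr (- \<alpha>))"
proof -
  have bound: "1 - Re (char \<mu> (u / b)) \<le> C * b powr (- \<alpha>)" if "u \<in> {0..1}" for u
  proof -
    have "1 - Re (char \<mu> (u / b)) \<le> C * \<bar>u / b\<bar> powr \<alpha>"
      using exp_ge_add_one_self[of "- C * \<bar>u / b\<bar> powr \<alpha>"] by (simp add: char)
    also have "\<bar>u / b\<bar> powr \<alpha> = u powr \<alpha> / b powr \<alpha>"
      using that \<open>0 < b\<close> by (simp add: powr_divide[symmetric])
    also have "\<dots> = u powr \<alpha> * b powr (- \<alpha>)"
      by (simp add: powr_minus divide_inverse)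
    also have "C * (u powr \<alpha> * b powr (- \<alpha>)) \<le> C * (1 * b powr (- \<alpha>))"
      using that assms by (intro mult_left_mono mult_right_mono) (auto simp: powr_le1)
    finally show ?thesis by simp
  qed
  have "(\<integral>\<^sup>+u. ennreal ((1 - Re (char \<mu> (u / b))) * indicator {0..1} u) \<partial>lborel) \<le>
      (\<integral>\<^sup>+u. ennreal (C * b powr (- \<alpha>)) * indicator {0..1} (u::real) \<partial>lborel)"
    by (intro nn_integral_mono) (use bound in \<open>simp add: indicator_def ennreal_leI\<close>)
  also have "\<dots> = ennreal (C * b powr (- \<alpha>))"
    by (simp add: nn_integral_cmult_indicator)
  finally have char_part: "(\<integral>\<^sup>+u. ennreal ((1 - Re (char \<mu> (u / b))) * indicator {0..1} u) \<partial>lborel) \<le>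
      ennreal (C * b powr (- \<alpha>))" .
  have "(\<integral>\<^sup>+x. ennreal (min ((x / b)\<^sup>2) 1) \<partial>\<mu>) \<le>
      10 * (\<integral>\<^sup>+u. ennreal ((1 - Re (char \<mu> (u / b))) * indicator {0..1} u) \<partial>lborel)"
    by (rule nn_integral_truncated_square_le_char[OF D \<open>0 < b\<close>])
  also have "\<dots> \<le> 10 * ennreal (C * b powr (- \<alpha>))"
    by (rule mult_left_mono[OF char_part]) simp
  also have "\<dots> = ennreal (10 * C * b powr (- \<alpha>))"
    using ennreal_mult[of 10 "C * b powr (- \<alpha>)"] \<open>0 < C\<close> by (simp add: mult.assoc)
  finally show ?thesis .
qed

lemma integral_odd_eq_0_if_char_even:
  fixes \<mu> :: "real measure" and h :: "real \<Rightarrow> real"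
  assumes D: "real_distribution \<mu>" and even: "\<And>u. char \<mu> (- u) = char \<mu> u"
    and h: "h \<in> borel_measurable borel" and odd: "\<And>x. h (- x) = - h x"
  shows "(\<integral>x. h x \<partial>\<mu>) = 0"
proof -
  interpret mu: real_distribution \<mu> by fact
  have [measurable_cong]: "sets \<mu> = sets borel" by simp
  have neg: "(uminus :: real \<Rightarrow> real) \<in> measurable \<mu> borel" by measurable
  \<comment> \<open>by Levy uniqueness, \<open>-X\<close> has the same law as \<open>X\<close>\<close>
  have "char (distr \<mu> borel uminus) u = char \<mu> u" for u
  proof -
    have "char (distr \<mu> borel uminus) u = (CLINT x|\<mu>. iexp (u * (- x)))"
      unfolding char_def using neg by (subst integral_distr) auto
    also have "\<dots> = char \<mu> (- u)"
      unfolding char_def by simp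
    finally show ?thesis by (simp add: even)
  qed
  then have "char (distr \<mu> borel uminus) = char \<mu>" ..
  then have reflect: "distr \<mu> borel uminus = \<mu>"
    by (rule Levy_uniqueness[OF mu.real_distribution_distr[OF neg] D])
  have "(\<integral>x. h x \<partial>\<mu>) = (\<integral>x. h (- x) \<partial>\<mu>)"
    by (subst (1) reflect[symmetric]) (simp add: integral_distr[OF neg h])
  then show ?thesis by (simp add: odd)
qed


section \<open>Partial sums of independent centred increments\<close>

locale indep_walk = prob_space M for M :: "'a measure" +
  fixes Y :: "nat \<Rightarrow> 'a \<Rightarrow> real" and a :: real and g :: "real \<Rightarrow> real" and B :: real
  assumes measurable_Y [measurable]: "\<And>i. Y i \<in> borel_measurable M"
    and indep_Y: "indep_vars (\<lambda>_. borel) Y UNIV"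
    and pos_a: "0 < a"
    and measurable_g [measurable]: "g \<in> borel_measurable borel"
    and bounded_g: "\<And>x. \<bar>g x\<bar> \<le> B"
    and mean_zero: "\<And>i. (\<integral>\<omega>. g (Y i \<omega>) \<partial>M) = 0"
begin

abbreviation "X \<equiv> partial_sum_process a Y"
abbreviation "F \<equiv> nat_filtration M X"
abbreviation "S \<equiv> partial_sum_process a (\<lambda>i \<omega>. g (Y i \<omega>))"

definition generators :: "real \<Rightarrow> 'a set set" where
  "generators s = {X r -` B \<inter> space M | r B. 0 \<le> r \<and> r \<le> s \<and> B \<in> sets borel}"

definition Y_events :: "nat \<Rightarrow> 'a set set" where
  "Y_events j = {Y j -` A \<inter> space M | A. A \<in> sets borel}"

abbreviation "sigma_Y J \<equiv> sigma (space M) (\<Union>j\<in>J. Y_events j)"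

lemma measurable_X [measurable]: "X r \<in> borel_measurable M"
  unfolding partial_sum_process_def by measurable

lemma generators_subset: "generators s \<subseteq> sets M"
  unfolding generators_def by auto

lemma sets_F: "sets (F s) = sigma_sets (space M) (generators s)"
  unfolding nat_filtration_def generators_def[symmetric]
  using generators_subset sets.sets_into_space by (intro sets_measure_of) blast

lemma space_F: "space (F s) = space M"
  unfolding nat_filtration_def generators_def[symmetric]
  using generators_subset sets.sets_into_space by (intro space_measure_of) blast

lemma subalgebra_F: "subalgebra M (F s)"
  unfolding subalgebra_def sets_F space_F
  using sets.sigma_sets_subset[OF generators_subset] by auto

lemma sets_F_subset: "A \<in> sets (F s) \<Longrightarrow> A \<in> sets M"
  using subalgebra_F unfolding subalgebra_def by auto

lemma X_measurable_F:
  assumes "0 \<le> r" "r \<le> s"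
  shows "X r \<in> borel_measurable (F s)"
proof (rule measurableI)
  fix B :: "real set" assume "B \<in> sets borel"
  then have "X r -` B \<inter> space M \<in> generators s"
    unfolding generators_def using assms by blast
  then show "X r -` B \<inter> space (F s) \<in> sets (F s)"
    unfolding sets_F space_F by blast
qed simp

lemma Y_measurable_F:
  assumes "1 \<le> i" "i \<le> nat \<lfloor>a * s\<rfloor>"
  shows "Y i \<in> borel_measurable (F s)"
proof -
  \<comment> \<open>\<open>Y i\<close> is the jump of \<open>X\<close> at time \<open>i / a\<close>\<close>
  have grid: "nat \<lfloor>a * (real k / a)\<rfloor> = k" for k using pos_a by simp
  have Y_eq: "Y i = (\<lambda>\<omega>. X (real i / a) \<omega> - X (real (i - 1) / a) \<omega>)"
  proof
    fix \<omega>
    show "Y i \<omega> = X (real i / a) \<omega> - X (real (i - 1) / a) \<omega>"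
      unfolding partial_sum_process_def grid
      by (rule sum_atLeastAtMost_diff_pred[OF assms(1), of "\<lambda>j. Y j \<omega>", symmetric])
  qed
  have "int i \<le> \<lfloor>a * s\<rfloor>"
    using assms by linarith
  then have "real i \<le> a * s"
    by linarith
  then have "real i / a \<le> s"
    using pos_a by (simp add: divide_le_eq mult.commute)
  moreover have "real (i - 1) / a \<le> real i / a"
    using pos_a by (simp add: divide_right_mono)
  ultimately show ?thesis
    unfolding Y_eq using pos_a by (auto intro!: borel_measurable_diff X_measurable_F)
qed

lemma S_adapted:
  assumes "nat \<lfloor>a * t\<rfloor> \<le> nat \<lfloor>a * s\<rfloor>"
  shows "S t \<in> borel_measurable (F s)"
proof -
  have S_eq: "S t = (\<lambda>\<omega>. \<Sum>i\<in>{1..nat \<lfloor>a * t\<rfloor>}. g (Y i \<omega>))"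
    by (simp add: fun_eq_iff partial_sum_process_def)
  show ?thesis
    unfolding S_eq using assms
    by (intro borel_measurable_sum measurable_compose[OF Y_measurable_F measurable_g]) auto
qed

lemma Y_events_subset: "(\<Union>j\<in>J. Y_events j) \<subseteq> Pow (space M)"
  unfolding Y_events_def by auto

lemma Y_measurable_sigma_Y:
  assumes "j \<in> J"
  shows "Y j \<in> borel_measurable (sigma_Y J)"
proof (rule measurableI)
  fix A :: "real set" assume "A \<in> sets borel"
  then have "Y j -` A \<inter> space M \<in> (\<Union>j\<in>J. Y_events j)"
    unfolding Y_events_def using assms by blast
  then show "Y j -` A \<inter> space (sigma_Y J) \<in> sets (sigma_Y J)"
    unfolding sets_measure_of[OF Y_events_subset] space_measure_of[OF Y_events_subset] by blast
qed simp

lemma sets_F_subset_sigma_Y: "sets (F s) \<subseteq> sets (sigma_Y {..nat \<lfloor>a * s\<rfloor>})"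
proof -
  have "generators s \<subseteq> sets (sigma_Y {..nat \<lfloor>a * s\<rfloor>})"
  proof
    fix A assume "A \<in> generators s"
    then obtain r B where A: "A = X r -` B \<inter> space M" "0 \<le> r" "r \<le> s" "B \<in> sets borel"
      unfolding generators_def by blast
    have "nat \<lfloor>a * r\<rfloor> \<le> nat \<lfloor>a * s\<rfloor>"
      using A pos_a by (intro nat_mono floor_mono) simp
    then have "X r \<in> borel_measurable (sigma_Y {..nat \<lfloor>a * s\<rfloor>})"
      unfolding partial_sum_process_def by (intro borel_measurable_sum Y_measurable_sigma_Y) auto
    from measurable_sets[OF this A(4)] show "A \<in> sets (sigma_Y {..nat \<lfloor>a * s\<rfloor>})"
      unfolding A(1) by (simp add: space_measure_of_conv)
  qed
  then show ?thesis
    unfolding sets_F using sets.sigma_sets_subset[of "generators s" "sigma_Y {..nat \<lfloor>a * s\<rfloor>}"]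
    by (simp add: space_measure_of[OF Y_events_subset])
qed

lemma indep_set_sigma_Y: "indep_set (sets (sigma_Y {..N})) (sets (sigma_Y {N<..}))"
proof -
  have "indep_sets (\<lambda>j. sigma_sets (space M) (Y_events j)) UNIV"
    using indep_Y unfolding indep_vars_def Y_events_def by blast
  then have indep_events: "indep_sets Y_events UNIV"
    by (rule indep_sets_mono_sets) auto
  have "indep_sets (\<lambda>b. sigma_sets (space M) (\<Union>j\<in>case_bool {..N} {N<..} b. Y_events j)) UNIV"
  proof (rule indep_sets_collect_sigma)
    show "indep_sets Y_events (\<Union>b\<in>UNIV. case_bool {..N} {N<..} b)"
      by (rule indep_sets_mono_index[OF _ indep_events]) auto
    show "Int_stable (Y_events j)" for j
      unfolding Int_stable_def Y_events_def
    proof safe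
      fix A B :: "real set" assume "A \<in> sets borel" "B \<in> sets borel"
      then show "\<exists>C. Y j -` A \<inter> space M \<inter> (Y j -` B \<inter> space M) = Y j -` C \<inter> space M \<and> C \<in> sets borel"
        by (intro exI[of _ "A \<inter> B"]) auto
    qed
    show "disjoint_family_on (case_bool {..N} {N<..}) UNIV"
      unfolding disjoint_family_on_def by (auto split: bool.split)
  qed
  moreover have "(\<lambda>b. sigma_sets (space M) (\<Union>j\<in>case_bool {..N} {N<..} b. Y_events j)) =
      case_bool (sets (sigma_Y {..N})) (sets (sigma_Y {N<..}))"
    by (rule ext) (simp add: sets_measure_of[OF Y_events_subset] split: bool.split)
  ultimately show ?thesis
    unfolding indep_set_def by simp
qed

lemma integrable_g_Y: "integrable M (\<lambda>\<omega>. g (Y i \<omega>))"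
  using bounded_g by (intro integrable_const_bound[where B = B]) auto

lemma integrable_S: "integrable M (S t)"
  unfolding partial_sum_process_def by (intro Bochner_Integration.integrable_sum integrable_g_Y)

text \<open>The increments of \<open>S\<close> after time \<open>s\<close> are independent of \<open>F s\<close> and centred.\<close>

lemma integral_indicator_times_increment:
  assumes A: "A \<in> sets (F s)"
  shows "(\<integral>\<omega>. indicator A \<omega> * (\<Sum>i\<in>{nat \<lfloor>a * s\<rfloor><..N'}. g (Y i \<omega>)) \<partial>M) = 0"
proof -
  define N where "N = nat \<lfloor>a * s\<rfloor>"
  define D where "D \<omega> = (\<Sum>i\<in>{N<..N'}. g (Y i \<omega>))" for \<omega>
  have [measurable]: "D \<in> borel_measurable M"
    unfolding D_def by measurable
  have D_tail: "D \<in> borel_measurable (sigma_Y {N<..})"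
    unfolding D_def by (intro borel_measurable_sum measurable_compose[OF Y_measurable_sigma_Y measurable_g]) auto
  have A_head: "indicator A \<in> borel_measurable (sigma_Y {..N})"
    using A sets_F_subset_sigma_Y[of s] unfolding N_def by (auto intro: borel_measurable_indicator)
  have sigma_subset: "sigma_sets (space M) {f -` B \<inter> space M | B. B \<in> sets (borel :: real measure)} \<subseteq> sets (sigma_Y J)"
    if f: "f \<in> borel_measurable (sigma_Y J)" for f :: "'a \<Rightarrow> real" and J
  proof -
    have "{f -` B \<inter> space M | B. B \<in> sets (borel :: real measure)} \<subseteq> sets (sigma_Y J)"
      using measurable_sets[OF f] by (auto simp: space_measure_of[OF Y_events_subset])
    then show ?thesis
      using sets.sigma_sets_subset[of _ "sigma_Y J"] by (simp add: space_measure_of[OF Y_events_subset])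
  qed
  have "indep_var borel (indicator A) borel D"
    unfolding indep_var_eq
  proof (intro conjI)
    show "random_variable borel (indicator A :: 'a \<Rightarrow> real)"
      using sets_F_subset[OF A] by simp
    show "random_variable borel D"
      by simp
    show "indep_set (sigma_sets (space M) {indicator A -` B \<inter> space M | B. B \<in> sets (borel :: real measure)})
        (sigma_sets (space M) {D -` B \<inter> space M | B. B \<in> sets (borel :: real measure)})"
      using indep_set_sigma_Y[of N] sigma_subset[OF A_head] sigma_subset[OF D_tail]
      unfolding indep_sets2_eq by blast
  qed
  moreover have "integrable M (indicator A :: 'a \<Rightarrow> real)"
    using sets_F_subset[OF A] by (intro integrable_const_bound[where B = 1]) (auto simp: indicator_def)
  moreover have "integrable M D"
    unfolding D_def by (intro Bochner_Integration.integrable_sum integrable_g_Y)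
  ultimately have "(\<integral>\<omega>. indicator A \<omega> * D \<omega> \<partial>M) = (\<integral>\<omega>. indicator A \<omega> \<partial>M) * (\<integral>\<omega>. D \<omega> \<partial>M)"
    by (rule indep_var_lebesgue_integral)
  also have "(\<integral>\<omega>. D \<omega> \<partial>M) = 0"
    unfolding D_def by (simp add: Bochner_Integration.integral_sum integrable_g_Y mean_zero)
  finally show ?thesis unfolding D_def N_def by simp
qed

lemma cond_exp_S:
  assumes "s \<le> t"
  shows "AE \<omega> in M. real_cond_exp M (F s) (S t) \<omega> = S s \<omega>"
proof -
  interpret finite_measure_subalgebra M "F s"
    by unfold_locales (rule subalgebra_F)
  define N where "N = nat \<lfloor>a * s\<rfloor>"
  have "N \<le> nat \<lfloor>a * t\<rfloor>"
    unfolding N_def using assms pos_a by (intro nat_mono floor_mono) simp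
  then have split: "S t \<omega> = S s \<omega> + (\<Sum>i\<in>{N<..nat \<lfloor>a * t\<rfloor>}. g (Y i \<omega>))" for \<omega>
    unfolding partial_sum_process_def N_def[symmetric]
    using sum_atLeastAtMost_diff[of N "nat \<lfloor>a * t\<rfloor>" "\<lambda>i. g (Y i \<omega>)"] by simp
  show ?thesis
  proof (rule real_cond_exp_charact)
    fix A assume A: "A \<in> sets (F s)"
    let ?D = "\<lambda>x. \<Sum>i\<in>{N<..nat \<lfloor>a * t\<rfloor>}. g (Y i x)"
    have "integrable M (\<lambda>x. indicator A x * S s x)"
      using integrable_mult_indicator[OF sets_F_subset[OF A] integrable_S] by simp
    moreover have "integrable M (\<lambda>x. indicator A x * ?D x)"
      using integrable_mult_indicator[OF sets_F_subset[OF A] Bochner_Integration.integrable_sum[OF integrable_g_Y]]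
      by simp
    ultimately have "(\<integral>x\<in>A. S t x \<partial>M) = (\<integral>x. indicator A x * S s x \<partial>M) + (\<integral>x. indicator A x * ?D x \<partial>M)"
      unfolding set_lebesgue_integral_def split by (simp add: distrib_left)
    also have "(\<integral>x. indicator A x * ?D x \<partial>M) = 0"
      unfolding N_def by (rule integral_indicator_times_increment[OF A])
    finally show "(\<integral>x\<in>A. S t x \<partial>M) = (\<integral>x\<in>A. S s x \<partial>M)"
      unfolding set_lebesgue_integral_def by simp
  qed (auto intro: integrable_S S_adapted)
qed

lemma martingale_stopped_S: "martingale M F (\<lambda>t \<omega>. S (min t (real k)) \<omega>)"
  unfolding martingale_def adapted_def
proof (intro conjI allI impI)
  fix t :: real
  have "nat \<lfloor>a * min t (real k)\<rfloor> \<le> nat \<lfloor>a * t\<rfloor>"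
    using pos_a by (intro nat_mono floor_mono) simp
  then show "S (min t (real k)) \<in> borel_measurable (F t)"
    by (rule S_adapted)
  show "integrable M (S (min t (real k)))"
    by (rule integrable_S)
next
  fix s t :: real assume "0 \<le> s \<and> s \<le> t"
  interpret finite_measure_subalgebra M "F s"
    by unfold_locales (rule subalgebra_F)
  show "AE \<omega> in M. real_cond_exp M (F s) (S (min t (real k))) \<omega> = S (min s (real k)) \<omega>"
  proof (cases "real k \<le> s")
    case True
    then have "nat \<lfloor>a * real k\<rfloor> \<le> nat \<lfloor>a * s\<rfloor>"
      using pos_a by (intro nat_mono floor_mono) simp
    then have "S (real k) \<in> borel_measurable (F s)"
      by (rule S_adapted)
    then show ?thesis
      using True \<open>0 \<le> s \<and> s \<le> t\<close> by (simp add: integrable_S)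
  next
    case False
    then show ?thesis
      using cond_exp_S[of s "min t (real k)"] \<open>0 \<le> s \<and> s \<le> t\<close> by simp
  qed
qed

lemma local_martingale_S: "local_martingale M F S"
  unfolding local_martingale_def
proof (intro conjI ballI exI)
  show "adapted F S"
    unfolding adapted_def using S_adapted[OF order_refl] by blast
  show "cadlag (\<lambda>t. S t \<omega>)" for \<omega>
    unfolding partial_sum_process_path by (rule cadlag_floor_step[OF pos_a])
  show "\<forall>k. stopping_time F (\<lambda>\<omega>. real k) \<and> (\<forall>\<omega>\<in>space M. 0 \<le> real k)"
    by (simp add: stopping_time_def)
  show "AE \<omega> in M. mono (\<lambda>k. real k) \<and> filterlim (\<lambda>k. real k) at_top sequentially"
    by (simp add: mono_def filterlim_real_sequentially)
  show "\<forall>k. martingale M F (\<lambda>t \<omega>. S (min t (real k)) \<omega>)"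
    using martingale_stopped_S by blast
qed

end

section \<open>The truncated scaled stable walk\<close>

definition Mn_delta :: "real \<Rightarrow> real \<Rightarrow> real \<Rightarrow> (nat \<Rightarrow> 'a \<Rightarrow> real) \<Rightarrow> nat \<Rightarrow> real \<Rightarrow> 'a \<Rightarrow> real" where
  "Mn_delta \<alpha> \<beta> \<delta> Y n =
     partial_sum_process (real n powr \<beta>) (\<lambda>i \<omega>. clamp \<delta> (Y i \<omega> / real n powr (\<beta> / \<alpha>)))"

definition Mn_delta_qv :: "real \<Rightarrow> real \<Rightarrow> real \<Rightarrow> (nat \<Rightarrow> 'a \<Rightarrow> real) \<Rightarrow> nat \<Rightarrow> real \<Rightarrow> 'a \<Rightarrow> real" where
  "Mn_delta_qv \<alpha> \<beta> \<delta> Y n =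
     partial_sum_process (real n powr \<beta>) (\<lambda>i \<omega>. (clamp \<delta> (Y i \<omega> / real n powr (\<beta> / \<alpha>)))\<^sup>2)"

locale sym_stable_sequence = prob_space M for M :: "'a measure" +
  fixes Y :: "nat \<Rightarrow> 'a \<Rightarrow> real" and \<alpha> C :: real
  assumes measurable_Y [measurable]: "\<And>i. Y i \<in> borel_measurable M"
    and indep_Y: "indep_vars (\<lambda>_. borel) Y UNIV"
    and identically_distributed: "\<And>i. distr M borel (Y i) = distr M borel (Y 0)"
    and char_Y0: "\<And>u. char (distr M borel (Y 0)) u = complex_of_real (exp (- C * \<bar>u\<bar> powr \<alpha>))"
    and pos_C: "0 < C" and pos_alpha: "0 < \<alpha>"
begin

abbreviation "\<mu> \<equiv> distr M borel (Y 0)"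

lemma real_distribution_Y0: "real_distribution \<mu>"
  by simp

lemma integral_clamp_Y_eq_0:
  assumes "0 < \<delta>"
  shows "(\<integral>\<omega>. clamp \<delta> (Y i \<omega> / c) \<partial>M) = 0"
proof -
  have "(\<integral>\<omega>. clamp \<delta> (Y i \<omega> / c) \<partial>M) = (\<integral>x. clamp \<delta> (x / c) \<partial>\<mu>)"
    using integral_distr[of "Y i" M borel "\<lambda>x. clamp \<delta> (x / c)"] identically_distributed[of i]
    by simp
  also have "\<dots> = 0"
    using assms clamp_minus[OF assms, of "_ / c"]
    by (intro integral_odd_eq_0_if_char_even[OF real_distribution_Y0]) (simp_all add: char_Y0)
  finally show ?thesis .
qed

lemma nn_integral_clamp_Y_square_le:
  assumes "0 < \<delta>" "0 < c"
  shows "(\<integral>\<^sup>+\<omega>. ennreal ((clamp \<delta> (Y i \<omega> / c))\<^sup>2) \<partial>M) \<le> ennreal (\<delta>\<^sup>2 * (10 * C * (c * \<delta>) powr (- \<alpha>)))"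
proof -
  have "(\<integral>\<^sup>+\<omega>. ennreal ((clamp \<delta> (Y i \<omega> / c))\<^sup>2) \<partial>M) = (\<integral>\<^sup>+x. ennreal ((clamp \<delta> (x / c))\<^sup>2) \<partial>\<mu>)"
    using nn_integral_distr[of "Y i" M borel "\<lambda>x. ennreal ((clamp \<delta> (x / c))\<^sup>2)"] identically_distributed[of i]
    by simp
  also have "\<dots> \<le> (\<integral>\<^sup>+x. ennreal (\<delta>\<^sup>2) * ennreal (min ((x / (c * \<delta>))\<^sup>2) 1) \<partial>\<mu>)"
  proof (rule nn_integral_mono)
    fix x
    have "(clamp \<delta> (x / c))\<^sup>2 \<le> \<delta>\<^sup>2 * min ((x / (c * \<delta>))\<^sup>2) 1"
      using power2_clamp_le[OF assms(1), of "x / c"] by (simp add: mult.commute)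
    then show "ennreal ((clamp \<delta> (x / c))\<^sup>2) \<le> ennreal (\<delta>\<^sup>2) * ennreal (min ((x / (c * \<delta>))\<^sup>2) 1)"
      by (simp add: ennreal_mult[symmetric] ennreal_leI)
  qed
  also have "\<dots> = ennreal (\<delta>\<^sup>2) * (\<integral>\<^sup>+x. ennreal (min ((x / (c * \<delta>))\<^sup>2) 1) \<partial>\<mu>)"
    by (rule nn_integral_cmult) measurable
  also have "\<dots> \<le> ennreal (\<delta>\<^sup>2) * ennreal (10 * C * (c * \<delta>) powr (- \<alpha>))"
    using assms pos_C pos_alpha
    by (intro mult_left_mono nn_integral_truncated_square_le_stable[OF real_distribution_Y0 char_Y0]) auto
  also have "\<dots> = ennreal (\<delta>\<^sup>2 * (10 * C * (c * \<delta>) powr (- \<alpha>)))"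
    using pos_C by (simp add: ennreal_mult)
  finally show ?thesis .
qed

lemma indep_walk_clamp:
  assumes "0 < a" "0 < \<delta>"
  shows "indep_walk M (\<lambda>i \<omega>. Y i \<omega> / c) a (clamp \<delta>) \<delta>"
proof
  show "indep_vars (\<lambda>_. borel) (\<lambda>i \<omega>. Y i \<omega> / c) UNIV"
    using indep_vars_compose2[OF indep_Y, of "\<lambda>_ x. x / c" "\<lambda>_. borel"] by simp
  show "\<bar>clamp \<delta> x\<bar> \<le> \<delta>" for x
    by (rule abs_clamp_le[OF assms(2)])
  show "(\<integral>\<omega>. clamp \<delta> (Y i \<omega> / c) \<partial>M) = 0" for i
    by (rule integral_clamp_Y_eq_0[OF assms(2)])
qed (use assms in simp_all)

lemma Xn_delta_decomposition:
  assumes "1 \<le> n" "0 < \<delta>"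
  shows "Xn_delta \<alpha> \<beta> \<delta> Y n = Mn_delta \<alpha> \<beta> \<delta> Y n"
    and "local_martingale M (nat_filtration M (Xn \<alpha> \<beta> Y n)) (Mn_delta \<alpha> \<beta> \<delta> Y n)"
    and "quadratic_variation M (Mn_delta \<alpha> \<beta> \<delta> Y n) (Mn_delta_qv \<alpha> \<beta> \<delta> Y n)"
proof -
  have a: "0 < real n powr \<beta>" using assms by simp
  interpret indep_walk M "\<lambda>i \<omega>. Y i \<omega> / real n powr (\<beta> / \<alpha>)" "real n powr \<beta>" "clamp \<delta>" \<delta>
    by (rule indep_walk_clamp[OF a assms(2)])
  show "Xn_delta \<alpha> \<beta> \<delta> Y n = Mn_delta \<alpha> \<beta> \<delta> Y n"
    unfolding Mn_delta_def by (rule Xn_delta_eq_partial_sum_process[OF assms])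
  show "local_martingale M (nat_filtration M (Xn \<alpha> \<beta> Y n)) (Mn_delta \<alpha> \<beta> \<delta> Y n)"
    unfolding Mn_delta_def Xn_eq_partial_sum_process by (rule local_martingale_S)
  show "quadratic_variation M (Mn_delta \<alpha> \<beta> \<delta> Y n) (Mn_delta_qv \<alpha> \<beta> \<delta> Y n)"
    unfolding Mn_delta_def Mn_delta_qv_def by (rule quadratic_variation_partial_sum_process[OF a]) simp
qed

text \<open>The scaling \<open>n\<^sup>\<beta>\<close> of time and \<open>n\<^sup>\<beta>\<^sup>/\<^sup>\<alpha>\<close> of space cancel in the truncated second moment,
  so the bound is uniform in \<open>n\<close>.\<close>

lemma nn_integral_Mn_delta_qv_le:
  assumes "1 \<le> n" "0 < \<delta>" "0 \<le> t"
  shows "(\<integral>\<^sup>+\<omega>. ennreal (Mn_delta_qv \<alpha> \<beta> \<delta> Y n t \<omega>) \<partial>M) \<le> ennreal (t * (\<delta>\<^sup>2 * (10 * C * \<delta> powr (- \<alpha>))))"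
proof -
  define a where "a = real n powr \<beta>"
  define c where "c = real n powr (\<beta> / \<alpha>)"
  define K where "K = \<delta>\<^sup>2 * (10 * C * \<delta> powr (- \<alpha>))"
  have "0 < a" "0 < c" "0 \<le> K"
    using assms pos_C unfolding a_def c_def K_def by auto
  have "(c * \<delta>) powr (- \<alpha>) = real n powr (- \<beta>) * \<delta> powr (- \<alpha>)"
    using assms pos_alpha unfolding c_def by (simp add: powr_mult powr_powr)
  then have K_n: "\<delta>\<^sup>2 * (10 * C * (c * \<delta>) powr (- \<alpha>)) = K * real n powr (- \<beta>)"
    unfolding K_def by simp
  have "(\<integral>\<^sup>+\<omega>. ennreal (Mn_delta_qv \<alpha> \<beta> \<delta> Y n t \<omega>) \<partial>M) \<le> of_nat (nat \<lfloor>a * t\<rfloor>) * ennreal (K * real n powr (- \<beta>))"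
    unfolding Mn_delta_qv_def a_def[symmetric] c_def[symmetric] K_n[symmetric]
    using nn_integral_clamp_Y_square_le[OF assms(2) \<open>0 < c\<close>]
    by (intro nn_integral_partial_sum_process_le) auto
  also have "\<dots> = ennreal (real (nat \<lfloor>a * t\<rfloor>) * (K * real n powr (- \<beta>)))"
    using \<open>0 \<le> K\<close> by (simp add: ennreal_mult ennreal_of_nat_eq_real_of_nat)
  also have "\<dots> \<le> ennreal (a * t * (K * real n powr (- \<beta>)))"
    using \<open>0 < a\<close> \<open>0 \<le> K\<close> assms(3) by (intro ennreal_leI mult_right_mono) auto
  also have "a * t * (K * real n powr (- \<beta>)) = t * K"
    using assms(1) unfolding a_def by (simp add: powr_minus field_simps)
  finally show ?thesis unfolding K_def .
qed

lemma nn_integral_stopped_Mn_delta_qv_le: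
  assumes "1 \<le> n" "0 < \<delta>" "0 \<le> t"
  shows "(\<integral>\<^sup>+\<omega>. ennreal (Mn_delta_qv \<alpha> \<beta> \<delta> Y n (min t (\<tau> \<omega>)) \<omega>) \<partial>M) \<le>
    ennreal (t * (\<delta>\<^sup>2 * (10 * C * \<delta> powr (- \<alpha>))))"
proof -
  have "(\<integral>\<^sup>+\<omega>. ennreal (Mn_delta_qv \<alpha> \<beta> \<delta> Y n (min t (\<tau> \<omega>)) \<omega>) \<partial>M) \<le>
      (\<integral>\<^sup>+\<omega>. ennreal (Mn_delta_qv \<alpha> \<beta> \<delta> Y n t \<omega>) \<partial>M)"
    unfolding Mn_delta_qv_def
    by (intro nn_integral_mono ennreal_leI partial_sum_process_mono) auto
  also have "\<dots> \<le> ennreal (t * (\<delta>\<^sup>2 * (10 * C * \<delta> powr (- \<alpha>))))"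
    by (rule nn_integral_Mn_delta_qv_le[OF assms])
  finally show ?thesis .
qed

end

theorem mainTheorem5:
  fixes M :: "'a measure" and Y :: "nat \<Rightarrow> 'a \<Rightarrow> real" and \<alpha> \<beta> \<delta> :: real
  assumes "prob_space M"
    and "\<And>i. Y i \<in> borel_measurable M"
    and "prob_space.indep_vars M (\<lambda>_. borel) Y UNIV"
    and "\<And>i. distr M borel (Y i) = distr M borel (Y 0)"
    and "sym_stable \<alpha> (distr M borel (Y 0))"
    and "0 < \<alpha>" and "\<alpha> \<le> 2"
    and "0 < \<beta>" and "\<beta> < 1"
    and "0 < \<delta>"
  shows "\<exists>(Mt :: nat \<Rightarrow> real \<Rightarrow> 'a \<Rightarrow> real) (A :: nat \<Rightarrow> real \<Rightarrow> 'a \<Rightarrow> real)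
            (Q :: nat \<Rightarrow> real \<Rightarrow> 'a \<Rightarrow> real).
    (\<forall>n\<ge>1.
       (AE \<omega> in M. \<forall>t\<ge>0. Xn_delta \<alpha> \<beta> \<delta> Y n t \<omega> = Mt n t \<omega> + A n t \<omega>) \<and>
       local_martingale M (nat_filtration M (Xn \<alpha> \<beta> Y n)) (Mt n) \<and>
       finite_variation_process M (nat_filtration M (Xn \<alpha> \<beta> Y n)) (A n) \<and>
       quadratic_variation M (Mt n) (Q n)) \<and>
    (\<forall>t\<ge>0. \<forall>\<theta>>0. \<exists>\<tau> :: nat \<Rightarrow> 'a \<Rightarrow> real.
       (\<forall>n\<ge>1. stopping_time (nat_filtration M (Xn \<alpha> \<beta> Y n)) (\<tau> n) \<and>
              (\<forall>\<omega>\<in>space M. 0 \<le> \<tau> n \<omega>) \<and>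
              measure M {\<omega> \<in> space M. \<tau> n \<omega> \<le> \<theta>} \<le> 1 / \<theta>) \<and>
       (SUP n\<in>{1..}. \<integral>\<^sup>+ \<omega>. (ennreal (Q n (min t (\<tau> n \<omega>)) \<omega>)
            + total_variation (\<lambda>s. A n s \<omega>) (min t (\<tau> n \<omega>))) \<partial>M) < \<infinity>)"
proof -
  interpret prob_space M by fact
  obtain C where "0 < C" and char: "\<And>u. char (distr M borel (Y 0)) u = complex_of_real (exp (- C * \<bar>u\<bar> powr \<alpha>))"
    using assms(5) unfolding sym_stable_def by blast
  interpret sym_stable_sequence M Y \<alpha> C
    using assms(2-4,6) char \<open>0 < C\<close> by unfold_locales auto
  define K where "K = \<delta>\<^sup>2 * (10 * C * \<delta> powr (- \<alpha>))"
  have decomposition: "\<forall>n\<ge>1.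
      (AE \<omega> in M. \<forall>t\<ge>0. Xn_delta \<alpha> \<beta> \<delta> Y n t \<omega> = Mn_delta \<alpha> \<beta> \<delta> Y n t \<omega> + 0) \<and>
      local_martingale M (nat_filtration M (Xn \<alpha> \<beta> Y n)) (Mn_delta \<alpha> \<beta> \<delta> Y n) \<and>
      finite_variation_process M (nat_filtration M (Xn \<alpha> \<beta> Y n)) (\<lambda>t \<omega>. 0) \<and>
      quadratic_variation M (Mn_delta \<alpha> \<beta> \<delta> Y n) (Mn_delta_qv \<alpha> \<beta> \<delta> Y n)"
    using Xn_delta_decomposition[OF _ \<open>0 < \<delta>\<close>] finite_variation_process_zero by auto
  have bounded: "(SUP n\<in>{1..}. \<integral>\<^sup>+\<omega>. (ennreal (Mn_delta_qv \<alpha> \<beta> \<delta> Y n (min t (\<theta> + 1)) \<omega>)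
      + total_variation (\<lambda>s. 0) (min t (\<theta> + 1))) \<partial>M) < \<infinity>" if "0 \<le> t" for t \<theta> :: real
  proof -
    have "(\<integral>\<^sup>+\<omega>. (ennreal (Mn_delta_qv \<alpha> \<beta> \<delta> Y n (min t (\<theta> + 1)) \<omega>)
        + total_variation (\<lambda>s. 0) (min t (\<theta> + 1))) \<partial>M) \<le> ennreal (t * K)" if "n \<in> {1..}" for n
      using that nn_integral_stopped_Mn_delta_qv_le[OF _ \<open>0 < \<delta>\<close> \<open>0 \<le> t\<close>, where \<tau> = "\<lambda>_. \<theta> + 1"]
      unfolding K_def by (simp add: total_variation_const)
    then have "(SUP n\<in>{1..}. \<integral>\<^sup>+\<omega>. (ennreal (Mn_delta_qv \<alpha> \<beta> \<delta> Y n (min t (\<theta> + 1)) \<omega>)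
        + total_variation (\<lambda>s. 0) (min t (\<theta> + 1))) \<partial>M) \<le> ennreal (t * K)"
      by (rule SUP_least)
    then show ?thesis
      unfolding infinity_ennreal_def using ennreal_less_top by (rule le_less_trans)
  qed
  \<comment> \<open>the bound holds for all stopping times, so the constant time \<open>\<theta> + 1\<close> will do\<close>
  show ?thesis
    apply (rule exI[of _ "Mn_delta \<alpha> \<beta> \<delta> Y"], rule exI[of _ "\<lambda>n t \<omega>. 0"],
        rule exI[of _ "Mn_delta_qv \<alpha> \<beta> \<delta> Y"], rule conjI[OF decomposition], intro allI impI)
    subgoal for t \<theta>
      apply (rule exI[of _ "\<lambda>n \<omega>. \<theta> + 1"])
      using bounded[of t \<theta>] by (simp add: stopping_time_def)
    done
qed

end
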